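(* Let $L>0$ and let $a,c\in C^1_{\mathrm{pw}}[-L,L]$ with $a_{\min}\le a\le a_{\max}$, $c_{\min}\le c\le c_{\max}$, $a_{\min},c_{\min}>0$, and let $-L=z_0<\dots<z_N=L$ be a partition such that on each $\tau_j=(z_{j-1},z_j)$, $a,c\in C^1[z_{j-1},z_j]$ and each of $a',c'$ is either $>0$ throughout $\tau_j$ or $\le0$ throughout $\tau_j$. Define $\tilde a$ on $\tau_j$ by $\tilde a=a$ if $a'>0$ on $\tau_j$ and $\tilde a\equiv a^+(z_{j-1})$ if $a'\le0$ on $\tau_j$, and $\tilde c$ analogously from $c$. For $j=1,\dots,N-1$ let $$\alpha_j=\max\Big\{\frac{\tilde a^-(z_j)}{\tilde a^+(z_j)},1\Big\},\quad \sigma_j=\max\Big\{\frac{(\tilde c^2)^-(z_j)}{(\tilde c^2)^+(z_j)},1\Big\},\quad \gamma_j=\max\Big\{\frac{a^+(z_j)}{a^-(z_j)},\frac{(c^2)^+(z_j)}{(c^2)^-(z_j)},1\Big\}.$$ Define $A_1=0$ and $A_{j+1}=\alpha_j\sigma_j\gamma_j\big(\int_{\tau_j}\frac{1}{\tilde a\,\tilde c^2}+A_j\big)$ for $j=1,\dots,N-1$, and $$q(x)=\tilde a(x)\tilde c^2(x)\Big(\int_{z_{j-1}}^x\frac{ds}{\tilde a(s)\tilde c^2(s)}+A_j\Big),\qquad x\in\tau_j,\ 1\le j\le N.$$ Then $q$ is increasing on $[-L,L]$, $q(-L)=0$, and for each $j=1,\dots,N$, $$\partial_{\mathrm{pw}}\Big(\frac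 qa\Big)(x)\ge\frac1{a(x)},\qquad\partial_{\mathrm{pw}}\Big(\frac q{c^2}\Big)(x)\ge\frac1{c^2(x)},\qquad x\in\tau_j,$$ and $[q/a]_{z_j}\le0$, $[q/c^2]_{z_j}\le0$ for $j=1,\dots,N-1$.
   Context: $C^1_{\mathrm{pw}}[-L,L]$ is the set of $g:[-L,L]\to\mathbb{R}$ for which there is a finite partition $-L=z_0<\dots<z_N=L$ with $g\in C^1[z_{j-1},z_j]$ for each $j$ and, on each $(z_{j-1},z_j)$, either $g'>0$ throughout or $g'\le0$ throughout. For the partition, $g^+(z_j)$, $g^-(z_j)$ are the right and left one-sided limits, $[g]_{z_j}=g^-(z_j)-g^+(z_j)$ for interior points, and $\partial_{\mathrm{pw}}g=g'$ on each open subinterval. $q(-L)$ means the limit from the right. *)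

theory Defs
  imports "HOL-Analysis.Analysis"
begin

text \<open>One-sided limits g^+(x) (from the right) and g^-(x) (from the left).\<close>
definition rlim :: "(real \<Rightarrow> real) \<Rightarrow> real \<Rightarrow> real" where
  "rlim g x = Lim (at_right x) g"

definition llim :: "(real \<Rightarrow> real) \<Rightarrow> real \<Rightarrow> real" where
  "llim g x = Lim (at_left x) g"

definition tau :: "(nat \<Rightarrow> real) \<Rightarrow> nat \<Rightarrow> real set" where
  "tau z j = {z (j - 1) <..< z j}"

text \<open>g is C^1 on the closed interval [z_{j-1}, z_j] (after redefining it at the
  endpoints by its one-sided limits), and g' > 0 throughout tau_j or g' \<le> 0 throughout tau_j.\<close>
definition C1_piece :: "(real \<Rightarrow> real) \<Rightarrow> real \<Rightarrow> real \<Rightarrow> bool" where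
  "C1_piece g s t \<longleftrightarrow>
     (\<exists>h h'. (\<forall>x\<in>{s..t}. (h has_real_derivative h' x) (at x within {s..t}))
            \<and> continuous_on {s..t} h' \<and> (\<forall>x\<in>{s<..<t}. g x = h x))"

definition sign_piece :: "(real \<Rightarrow> real) \<Rightarrow> real \<Rightarrow> real \<Rightarrow> bool" where
  "sign_piece g s t \<longleftrightarrow> (\<forall>x\<in>{s<..<t}. deriv g x > 0) \<or> (\<forall>x\<in>{s<..<t}. deriv g x \<le> 0)"

definition piece :: "(nat \<Rightarrow> real) \<Rightarrow> nat \<Rightarrow> real \<Rightarrow> nat" where
  "piece z N x = (THE j. j \<in> {1..N} \<and> x \<in> tau z j)"

definition tilde :: "(real \<Rightarrow> real) \<Rightarrow> (nat \<Rightarrow> real) \<Rightarrow> nat \<Rightarrow> real \<Rightarrow> real" where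
  "tilde g z N x = (let j = piece z N x in
      if (\<forall>y\<in>tau z j. deriv g y > 0) then g x else rlim g (z (j - 1)))"

definition alpha_c :: "(real \<Rightarrow> real) \<Rightarrow> (nat \<Rightarrow> real) \<Rightarrow> nat \<Rightarrow> nat \<Rightarrow> real" where
  "alpha_c a z N j = max (llim (tilde a z N) (z j) / rlim (tilde a z N) (z j)) 1"

definition sigma_c :: "(real \<Rightarrow> real) \<Rightarrow> (nat \<Rightarrow> real) \<Rightarrow> nat \<Rightarrow> nat \<Rightarrow> real" where
  "sigma_c c z N j = max (llim (\<lambda>x. (tilde c z N x)\<^sup>2) (z j) / rlim (\<lambda>x. (tilde c z N x)\<^sup>2) (z j)) 1"

definition gamma_c :: "(real \<Rightarrow> real) \<Rightarrow> (real \<Rightarrow> real) \<Rightarrow> (nat \<Rightarrow> real) \<Rightarrow> nat \<Rightarrow> real" where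
  "gamma_c a c z j = max (max (rlim a (z j) / llim a (z j))
                              (rlim (\<lambda>x. (c x)\<^sup>2) (z j) / llim (\<lambda>x. (c x)\<^sup>2) (z j))) 1"

definition Iac :: "(real \<Rightarrow> real) \<Rightarrow> (real \<Rightarrow> real) \<Rightarrow> (nat \<Rightarrow> real) \<Rightarrow> nat \<Rightarrow> real \<Rightarrow> real \<Rightarrow> real" where
  "Iac a c z N s t = integral {s..t} (\<lambda>y. 1 / (tilde a z N y * (tilde c z N y)\<^sup>2))"

text \<open>Aseq a c z N k = A_{k+1}: A_1 = 0, A_{j+1} = alpha_j sigma_j gamma_j (int_{tau_j} ... + A_j).\<close>
primrec Aseq :: "(real \<Rightarrow> real) \<Rightarrow> (real \<Rightarrow> real) \<Rightarrow> (nat \<Rightarrow> real) \<Rightarrow> nat \<Rightarrow> nat \<Rightarrow> real" where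
  "Aseq a c z N 0 = 0"
| "Aseq a c z N (Suc k) =
     alpha_c a z N (Suc k) * sigma_c c z N (Suc k) * gamma_c a c z (Suc k)
       * (Iac a c z N (z k) (z (Suc k)) + Aseq a c z N k)"

definition Acoef :: "(real \<Rightarrow> real) \<Rightarrow> (real \<Rightarrow> real) \<Rightarrow> (nat \<Rightarrow> real) \<Rightarrow> nat \<Rightarrow> nat \<Rightarrow> real" where
  "Acoef a c z N j = Aseq a c z N (j - 1)"

definition qfun :: "(real \<Rightarrow> real) \<Rightarrow> (real \<Rightarrow> real) \<Rightarrow> (nat \<Rightarrow> real) \<Rightarrow> nat \<Rightarrow> real \<Rightarrow> real" where
  "qfun a c z N x = (let j = piece z N x in
      tilde a z N x * (tilde c z N x)\<^sup>2 * (Iac a c z N (z (j - 1)) x + Acoef a c z N j))"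

end

theory Submission
  imports Defs
begin

text \<open>On each piece q = w S with weight w = \<tilde>a \<tilde>c^2, S' = 1 / w and S \<ge> 0, so
  (q / h)' = 1 / h + (w / h)' S for h = a and h = c^2. The derivative bounds therefore reduce
  to w / a and w / c^2 being nondecreasing, which holds because \<tilde>a, \<tilde>c are nondecreasing and
  so are \<tilde>a / a and \<tilde>c / c (\<tilde>a = a where a' > 0, \<tilde>a is constant where a' \<le> 0). Also
  q' = w' S + 1 > 0. At a breakpoint z_j the new constant A_(j+1) is the old S(z_j) times
  \<alpha>_j \<sigma>_j \<gamma>_j, which dominates the jump ratios of w, a and c^2; so q, q / a and q / c^2 can only
  jump upwards, and q increases across the whole partition.\<close>

lemma partition_mono:
  fixes z :: "nat \<Rightarrow> real"
  assumes z_less: "\<forall>j\<in>{1..N}. z (j - 1) < z j" and "i \<le> j" "j \<le> N"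
  shows "z i \<le> z j"
  using assms(2,3)
proof (induction j)
  case (Suc j)
  have "z j < z (Suc j)" using z_less Suc.prems by (metis atLeastAtMost_iff diff_Suc_1 le_add1 plus_1_eq_Suc)
  then show ?case using Suc by (cases "i = Suc j") auto
qed simp

lemma piece_eq:
  assumes z_less: "\<forall>j\<in>{1..N}. z (j - 1) < z j" and j: "j \<in> {1..N}" and x: "x \<in> tau z j"
  shows "piece z N x = j"
  unfolding piece_def
proof (rule the_equality)
  fix i assume i: "i \<in> {1..N} \<and> x \<in> tau z i"
  show "i = j"
  proof (rule ccontr)
    assume "i \<noteq> j"
    then have "z i \<le> z (j - 1) \<or> z j \<le> z (i - 1)"
      using i j by (auto intro!: partition_mono[OF z_less] simp del: One_nat_def)
    then show False using i x by (auto simp: tau_def)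
  qed
qed (use j x in simp)

lemma tendsto_at_right_of_continuous_on_Icc:
  fixes f g :: "real \<Rightarrow> real"
  assumes "s < t" "continuous_on {s..t} f" "\<forall>x\<in>{s<..<t}. g x = f x"
  shows "(g \<longlongrightarrow> f s) (at_right s)"
proof -
  have "(f \<longlongrightarrow> f s) (at s within {s..t})"
    using assms(1,2) by (simp add: continuous_on_eq_continuous_within continuous_within)
  then have "(f \<longlongrightarrow> f s) (at_right s)"
    using at_within_Icc_at_right[OF assms(1)] by simp
  moreover have "eventually (\<lambda>x. f x = g x) (at_right s)"
    unfolding eventually_at_right_field using assms by (intro exI[of _ t]) auto
  ultimately show ?thesis by (rule Lim_transform_eventually)
qed

lemma tendsto_at_left_of_continuous_on_Icc:
  fixes f g :: "real \<Rightarrow> real"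
  assumes "s < t" "continuous_on {s..t} f" "\<forall>x\<in>{s<..<t}. g x = f x"
  shows "(g \<longlongrightarrow> f t) (at_left t)"
proof -
  have "(f \<longlongrightarrow> f t) (at t within {s..t})"
    using assms(1,2) by (simp add: continuous_on_eq_continuous_within continuous_within)
  then have "(f \<longlongrightarrow> f t) (at_left t)"
    using at_within_Icc_at_left[OF assms(1)] by simp
  moreover have "eventually (\<lambda>x. f x = g x) (at_left t)"
    unfolding eventually_at_left_field using assms by (intro exI[of _ s]) auto
  ultimately show ?thesis by (rule Lim_transform_eventually)
qed

lemma continuous_on_Icc_lower_bound:
  fixes f :: "real \<Rightarrow> real"
  assumes "s < t" "continuous_on {s..t} f" "\<forall>y\<in>{s<..<t}. m \<le> f y" "x \<in> {s..t}"
  shows "m \<le> f x"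
  using continuous_ge_on_closure[of "{s<..<t}" f x m] assms closure_greaterThanLessThan[OF assms(1)]
  by auto

lemma rlim_eqI: "(g \<longlongrightarrow> l) (at_right x) \<Longrightarrow> rlim g x = l"
  unfolding rlim_def by (rule tendsto_Lim) (simp_all add: trivial_limit_at_right_real)

lemma llim_eqI: "(g \<longlongrightarrow> l) (at_left x) \<Longrightarrow> llim g x = l"
  unfolding llim_def by (rule tendsto_Lim) (simp_all add: trivial_limit_at_left_real)

text \<open>Since (w s / h)' = (w / h)' s + 1 / h when s' = 1 / w, a nondecreasing ratio w / h and
  s \<ge> 0 give the bound.\<close>
lemma DERIV_weighted_quotient_ge_inverse:
  fixes w s h :: "real \<Rightarrow> real"
  assumes w: "(w has_real_derivative w') (at x)" and s: "(s has_real_derivative 1 / w x) (at x)"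
    and h: "(h has_real_derivative h') (at x)"
    and pos: "w x > 0" "h x > 0" "s x \<ge> 0" and ratio: "w' * h x - w x * h' \<ge> 0"
  shows "\<exists>D. ((\<lambda>y. w y * s y / h y) has_real_derivative D) (at x) \<and> 1 / h x \<le> D"
proof (intro exI conjI)
  let ?D = "((w' * h x - w x * h') * s x + h x) / (h x * h x)"
  show "((\<lambda>y. w y * s y / h y) has_real_derivative ?D) (at x)"
    using DERIV_divide[OF DERIV_mult[OF w s] h] pos by (simp add: field_simps)
  have "1 / h x = h x / (h x * h x)" using pos by simp
  also have "\<dots> \<le> ?D"
    using pos ratio by (intro divide_right_mono) auto
  finally show "1 / h x \<le> ?D" .
qed

lemma jump_bound:
  fixes u u' v v' s p p' \<gamma> :: real
  assumes "0 \<le> u" "0 < u'" "0 \<le> v" "0 < v'" "0 \<le> s" "0 < p" "0 < p'" "p' / p \<le> \<gamma>"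
  shows "u * v * s / p \<le> u' * v' * (max (u / u') 1 * max (v / v') 1 * \<gamma> * s) / p'"
proof -
  have le: "u \<le> u' * max (u / u') 1" "v \<le> v' * max (v / v') 1"
    using assms by (auto simp: field_simps max_def)
  then have uv: "u * v * s \<le> (u' * max (u / u') 1) * (v' * max (v / v') 1) * s"
    using assms by (intro mult_right_mono mult_mono) auto
  have "u * v * s / p = u * v * s * (p' / p) / p'" using assms by simp
  also have "\<dots> \<le> (u' * max (u / u') 1) * (v' * max (v / v') 1) * s * \<gamma> / p'"
    using assms le uv by (intro divide_right_mono mult_mono) auto
  finally show ?thesis by (simp add: ac_simps)
qed

lemma Acoef_Suc:
  assumes "1 \<le> m"
  shows "Acoef a c z N (Suc m) = alpha_c a z N m * sigma_c c z N m * gamma_c a c z m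
           * (Iac a c z N (z (m - 1)) (z m) + Acoef a c z N m)"
  using assms Aseq.simps(2)[of a c z N "m - 1"] by (simp add: Acoef_def)

locale piecewise_C1 =
  fixes g :: "real \<Rightarrow> real" and z :: "nat \<Rightarrow> real" and N :: nat and gmin L :: real
  assumes gmin_pos: "gmin > 0" and gmin_le: "\<forall>x\<in>{-L..L}. gmin \<le> g x"
    and z0: "z 0 = -L" and zN: "z N = L"
    and z_less: "\<forall>j\<in>{1..N}. z (j - 1) < z j"
    and C1_sign: "\<forall>j\<in>{1..N}. C1_piece g (z (j - 1)) (z j) \<and> sign_piece g (z (j - 1)) (z j)"
begin

definition C1_extension :: "nat \<Rightarrow> (real \<Rightarrow> real) \<Rightarrow> (real \<Rightarrow> real) \<Rightarrow> bool" where
  "C1_extension j h h' \<longleftrightarrow>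
     (\<forall>x\<in>{z (j - 1)..z j}. (h has_real_derivative h' x) (at x within {z (j - 1)..z j}))
     \<and> continuous_on {z (j - 1)..z j} h' \<and> (\<forall>x\<in>tau z j. g x = h x)"

text \<open>The C^1 function on the closed piece that agrees with g inside it; its endpoint values
  are the one-sided limits g^+(z_(j-1)) and g^-(z_j).\<close>
definition g_piece :: "nat \<Rightarrow> real \<Rightarrow> real" where
  "g_piece j = (SOME h. \<exists>h'. C1_extension j h h')"

definition g_piece' :: "nat \<Rightarrow> real \<Rightarrow> real" where
  "g_piece' j = (SOME h'. C1_extension j (g_piece j) h')"

definition rising :: "nat \<Rightarrow> bool" where
  "rising j \<longleftrightarrow> (\<forall>y\<in>tau z j. deriv g y > 0)"

definition g_tilde :: "nat \<Rightarrow> real \<Rightarrow> real" where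
  "g_tilde j x = (if rising j then g_piece j x else g_piece j (z (j - 1)))"

definition g_tilde' :: "nat \<Rightarrow> real \<Rightarrow> real" where
  "g_tilde' j x = (if rising j then g_piece' j x else 0)"

lemma C1_extension_g_piece:
  assumes "j \<in> {1..N}"
  shows "C1_extension j (g_piece j) (g_piece' j)"
proof -
  have "\<exists>h h'. C1_extension j h h'"
    using C1_sign assms unfolding C1_piece_def C1_extension_def tau_def by blast
  then have "\<exists>h'. C1_extension j (g_piece j) h'" unfolding g_piece_def by (rule someI_ex)
  then show ?thesis unfolding g_piece'_def by (rule someI_ex)
qed

lemma piece_less: "j \<in> {1..N} \<Longrightarrow> z (j - 1) < z j"
  using z_less by blast

lemma tau_subset_Icc: "x \<in> tau z j \<Longrightarrow> x \<in> {z (j - 1)..z j}"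
  by (auto simp: tau_def)

lemma Icc_piece_subset:
  assumes "j \<in> {1..N}"
  shows "{z (j - 1)..z j} \<subseteq> {-L..L}"
proof -
  have "z 0 \<le> z (j - 1)" "z j \<le> z N" using assms by (auto intro!: partition_mono[OF z_less])
  then show ?thesis using z0 zN by auto
qed

lemma g_eq_g_piece: "j \<in> {1..N} \<Longrightarrow> x \<in> tau z j \<Longrightarrow> g x = g_piece j x"
  using C1_extension_g_piece unfolding C1_extension_def by blast

lemma continuous_on_g_piece: "j \<in> {1..N} \<Longrightarrow> continuous_on {z (j - 1)..z j} (g_piece j)"
  using C1_extension_g_piece unfolding C1_extension_def by (intro DERIV_continuous_on) blast

lemma g_piece_has_derivative:
  assumes "j \<in> {1..N}" "x \<in> tau z j"
  shows "(g_piece j has_real_derivative g_piece' j x) (at x)"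
proof -
  have "(g_piece j has_real_derivative g_piece' j x) (at x within {z (j - 1)..z j})"
    using C1_extension_g_piece[OF assms(1)] assms(2) unfolding C1_extension_def tau_def by auto
  then show ?thesis using at_within_Icc_at[of "z (j - 1)" x "z j"] assms(2) by (simp add: tau_def)
qed

lemma deriv_g:
  assumes "j \<in> {1..N}" "x \<in> tau z j"
  shows "deriv g x = g_piece' j x"
proof (rule DERIV_imp_deriv)
  show "(g has_real_derivative g_piece' j x) (at x)"
    by (rule has_field_derivative_transform_within_open[OF g_piece_has_derivative[OF assms] _ assms(2)])
       (auto simp: tau_def g_eq_g_piece[OF assms(1)])
qed

lemma g_piece_ge:
  assumes "j \<in> {1..N}" "x \<in> {z (j - 1)..z j}"
  shows "gmin \<le> g_piece j x"
proof (rule continuous_on_Icc_lower_bound[OF piece_less[OF assms(1)] continuous_on_g_piece[OF assms(1)] _ assms(2)])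
  show "\<forall>y\<in>{z (j - 1)<..<z j}. gmin \<le> g_piece j y"
  proof
    fix y assume y: "y \<in> {z (j - 1)<..<z j}"
    then have "gmin \<le> g y" using gmin_le Icc_piece_subset[OF assms(1)] by auto
    then show "gmin \<le> g_piece j y" using g_eq_g_piece[OF assms(1)] y by (simp add: tau_def)
  qed
qed

lemma g_piece_pos: "j \<in> {1..N} \<Longrightarrow> x \<in> {z (j - 1)..z j} \<Longrightarrow> g_piece j x > 0"
  using g_piece_ge gmin_pos by fastforce

lemma g_piece'_nonpos:
  assumes "j \<in> {1..N}" "\<not> rising j" "x \<in> tau z j"
  shows "g_piece' j x \<le> 0"
  using C1_sign assms deriv_g[OF assms(1,3)] unfolding sign_piece_def rising_def tau_def by fastforce

lemma tendsto_g_at_right: "j \<in> {1..N} \<Longrightarrow> (g \<longlongrightarrow> g_piece j (z (j - 1))) (at_right (z (j - 1)))"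
  using tendsto_at_right_of_continuous_on_Icc[OF piece_less continuous_on_g_piece] g_eq_g_piece
  by (auto simp: tau_def)

lemma tendsto_g_at_left: "j \<in> {1..N} \<Longrightarrow> (g \<longlongrightarrow> g_piece j (z j)) (at_left (z j))"
  using tendsto_at_left_of_continuous_on_Icc[OF piece_less continuous_on_g_piece] g_eq_g_piece
  by (auto simp: tau_def)

lemma tilde_eq_g_tilde:
  assumes "j \<in> {1..N}" "x \<in> tau z j"
  shows "tilde g z N x = g_tilde j x"
  using g_eq_g_piece[OF assms] rlim_eqI[OF tendsto_g_at_right[OF assms(1)]]
  unfolding tilde_def Let_def piece_eq[OF z_less assms] g_tilde_def rising_def by simp

lemma continuous_on_g_tilde: "j \<in> {1..N} \<Longrightarrow> continuous_on {z (j - 1)..z j} (g_tilde j)"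
  using continuous_on_g_piece unfolding g_tilde_def by (cases "rising j") auto

lemma g_tilde_pos: "j \<in> {1..N} \<Longrightarrow> x \<in> {z (j - 1)..z j} \<Longrightarrow> g_tilde j x > 0"
  using g_piece_pos piece_less unfolding g_tilde_def by auto

lemma g_tilde_has_derivative:
  "j \<in> {1..N} \<Longrightarrow> x \<in> tau z j \<Longrightarrow> (g_tilde j has_real_derivative g_tilde' j x) (at x)"
  using g_piece_has_derivative unfolding g_tilde_def g_tilde'_def by (cases "rising j") auto

lemma g_tilde'_nonneg: "j \<in> {1..N} \<Longrightarrow> x \<in> tau z j \<Longrightarrow> 0 \<le> g_tilde' j x"
  using deriv_g unfolding g_tilde'_def rising_def by (cases "rising j") (auto simp: rising_def)

lemma g_tilde_ratio_mono:
  assumes "j \<in> {1..N}" "x \<in> tau z j"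
  shows "g_tilde' j x * g_piece j x - g_tilde j x * g_piece' j x \<ge> 0"
proof (cases "rising j")
  case False
  have "g_tilde j x * g_piece' j x \<le> 0"
    using g_tilde_pos[OF assms(1) tau_subset_Icc[OF assms(2)]] g_piece'_nonpos[OF assms(1) False assms(2)]
    by (simp add: mult_nonneg_nonpos)
  then show ?thesis using False by (simp add: g_tilde'_def)
qed (simp add: g_tilde_def g_tilde'_def)

lemma tendsto_tilde_at_right:
  "j \<in> {1..N} \<Longrightarrow> (tilde g z N \<longlongrightarrow> g_tilde j (z (j - 1))) (at_right (z (j - 1)))"
  using tendsto_at_right_of_continuous_on_Icc[OF piece_less continuous_on_g_tilde] tilde_eq_g_tilde
  by (auto simp: tau_def)

lemma tendsto_tilde_at_left:
  "j \<in> {1..N} \<Longrightarrow> (tilde g z N \<longlongrightarrow> g_tilde j (z j)) (at_left (z j))"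
  using tendsto_at_left_of_continuous_on_Icc[OF piece_less continuous_on_g_tilde] tilde_eq_g_tilde
  by (auto simp: tau_def)

end

locale coefficient_pair = A: piecewise_C1 a z N amin L + C: piecewise_C1 c z N cmin L
  for a c :: "real \<Rightarrow> real" and z N amin cmin L
begin

definition weight :: "nat \<Rightarrow> real \<Rightarrow> real" where
  "weight j x = A.g_tilde j x * (C.g_tilde j x)\<^sup>2"

definition weight' :: "nat \<Rightarrow> real \<Rightarrow> real" where
  "weight' j x = A.g_tilde' j x * (C.g_tilde j x)\<^sup>2 + 2 * A.g_tilde j x * C.g_tilde j x * C.g_tilde' j x"

definition q_factor :: "nat \<Rightarrow> real \<Rightarrow> real" where
  "q_factor j x = integral {z (j - 1)..x} (\<lambda>y. 1 / weight j y) + Acoef a c z N j"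

definition q_piece :: "nat \<Rightarrow> real \<Rightarrow> real" where
  "q_piece j x = weight j x * q_factor j x"

lemma weight_pos:
  assumes "j \<in> {1..N}" "x \<in> {z (j - 1)..z j}"
  shows "weight j x > 0"
  unfolding weight_def using A.g_tilde_pos[OF assms] C.g_tilde_pos[OF assms] by simp

lemma continuous_on_weight: "j \<in> {1..N} \<Longrightarrow> continuous_on {z (j - 1)..z j} (weight j)"
  unfolding weight_def[abs_def] using A.continuous_on_g_tilde C.continuous_on_g_tilde
  by (intro continuous_intros)

lemma weight_has_derivative:
  assumes "j \<in> {1..N}" "x \<in> tau z j"
  shows "(weight j has_real_derivative weight' j x) (at x)"
  unfolding weight_def[abs_def] weight'_def
  by (rule derivative_eq_intros A.g_tilde_has_derivative[OF assms] C.g_tilde_has_derivative[OF assms]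
      | simp add: algebra_simps)+

lemma weight'_nonneg:
  assumes "j \<in> {1..N}" "x \<in> tau z j"
  shows "0 \<le> weight' j x"
  unfolding weight'_def
  using A.g_tilde'_nonneg[OF assms] C.g_tilde'_nonneg[OF assms]
    A.g_tilde_pos[OF assms(1) A.tau_subset_Icc[OF assms(2)]]
    C.g_tilde_pos[OF assms(1) A.tau_subset_Icc[OF assms(2)]]
  by (simp add: add_nonneg_nonneg)

lemma continuous_on_inverse_weight:
  "j \<in> {1..N} \<Longrightarrow> continuous_on {z (j - 1)..z j} (\<lambda>y. 1 / weight j y)"
  using continuous_on_weight weight_pos by (intro continuous_intros) force+

lemma q_factor_has_derivative_within:
  "j \<in> {1..N} \<Longrightarrow> x \<in> {z (j - 1)..z j} \<Longrightarrow>
    (q_factor j has_real_derivative 1 / weight j x) (at x within {z (j - 1)..z j})"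
  unfolding q_factor_def[abs_def]
  by (rule derivative_eq_intros integral_has_real_derivative continuous_on_inverse_weight | simp)+

lemma q_factor_has_derivative:
  assumes "j \<in> {1..N}" "x \<in> tau z j"
  shows "(q_factor j has_real_derivative 1 / weight j x) (at x)"
  using q_factor_has_derivative_within[OF assms(1) A.tau_subset_Icc[OF assms(2)]] assms(2)
    at_within_Icc_at[of "z (j - 1)" x "z j"]
  by (simp add: tau_def)

lemma continuous_on_q_factor: "j \<in> {1..N} \<Longrightarrow> continuous_on {z (j - 1)..z j} (q_factor j)"
  using q_factor_has_derivative_within by (intro DERIV_continuous_on) blast

lemma integral_inverse_weight_nonneg:
  assumes "j \<in> {1..N}" "x \<in> {z (j - 1)..z j}"
  shows "0 \<le> integral {z (j - 1)..x} (\<lambda>y. 1 / weight j y)"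
proof (rule integral_nonneg)
  show "(\<lambda>y. 1 / weight j y) integrable_on {z (j - 1)..x}"
    using assms by (intro integrable_continuous_interval continuous_on_subset[OF continuous_on_inverse_weight]) auto
  show "\<And>y. y \<in> {z (j - 1)..x} \<Longrightarrow> 0 \<le> 1 / weight j y"
    using weight_pos[OF assms(1)] assms(2) by (simp add: less_imp_le)
qed

lemma Iac_eq_integral:
  assumes "j \<in> {1..N}" "x \<in> {z (j - 1)<..z j}"
  shows "Iac a c z N (z (j - 1)) x = integral {z (j - 1)..x} (\<lambda>y. 1 / weight j y)"
proof -
  have "Iac a c z N (z (j - 1)) x = integral {z (j - 1)<..<x} (\<lambda>y. 1 / (tilde a z N y * (tilde c z N y)\<^sup>2))"
    unfolding Iac_def by (rule integral_open_interval_real)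
  also have "\<dots> = integral {z (j - 1)<..<x} (\<lambda>y. 1 / weight j y)"
    using assms A.tilde_eq_g_tilde[OF assms(1)] C.tilde_eq_g_tilde[OF assms(1)]
    by (intro integral_cong) (auto simp: tau_def weight_def)
  finally show ?thesis by (simp add: integral_open_interval_real)
qed

lemma Acoef_nonneg:
  assumes "1 \<le> j" "j \<le> N"
  shows "0 \<le> Acoef a c z N j"
  using assms
proof (induction j rule: nat_induct_at_least)
  case base
  then show ?case by (simp add: Acoef_def)
next
  case (Suc m)
  then have m: "m \<in> {1..N}" by simp
  have "0 \<le> Iac a c z N (z (m - 1)) (z m)"
    using Iac_eq_integral[OF m, of "z m"] integral_inverse_weight_nonneg[OF m, of "z m"] A.piece_less[OF m]
    by simp
  then show ?case
    using Suc Acoef_Suc[OF Suc.hyps] by (simp add: alpha_c_def sigma_c_def gamma_c_def)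
qed

lemma q_factor_nonneg: "j \<in> {1..N} \<Longrightarrow> x \<in> {z (j - 1)..z j} \<Longrightarrow> 0 \<le> q_factor j x"
  unfolding q_factor_def using integral_inverse_weight_nonneg Acoef_nonneg by (simp add: add_nonneg_nonneg)

lemma qfun_eq_q_piece:
  assumes "j \<in> {1..N}" "x \<in> tau z j"
  shows "qfun a c z N x = q_piece j x"
  using A.tilde_eq_g_tilde[OF assms] C.tilde_eq_g_tilde[OF assms] Iac_eq_integral[OF assms(1), of x] assms(2)
  unfolding qfun_def Let_def piece_eq[OF A.z_less assms] q_piece_def q_factor_def weight_def
  by (simp add: tau_def)

lemma continuous_on_q_piece: "j \<in> {1..N} \<Longrightarrow> continuous_on {z (j - 1)..z j} (q_piece j)"
  unfolding q_piece_def[abs_def] using continuous_on_weight continuous_on_q_factor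
  by (intro continuous_intros)

lemma q_piece_has_derivative:
  assumes "j \<in> {1..N}" "x \<in> tau z j"
  shows "(q_piece j has_real_derivative weight' j x * q_factor j x + 1) (at x)"
proof -
  have "weight j x \<noteq> 0" using weight_pos[OF assms(1) A.tau_subset_Icc[OF assms(2)]] by simp
  then show ?thesis
    using DERIV_mult[OF weight_has_derivative[OF assms] q_factor_has_derivative[OF assms]]
    unfolding q_piece_def[abs_def] by simp
qed

lemma q_piece_strict_mono:
  assumes "j \<in> {1..N}" "x \<in> {z (j - 1)..z j}" "y \<in> {z (j - 1)..z j}" "x < y"
  shows "q_piece j x < q_piece j y"
proof (rule DERIV_pos_imp_increasing_open[OF assms(4)])
  fix t assume "x < t" "t < y"
  then have t: "t \<in> tau z j" using assms by (auto simp: tau_def)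
  have "0 \<le> weight' j t * q_factor j t"
    using weight'_nonneg[OF assms(1) t] q_factor_nonneg[OF assms(1) A.tau_subset_Icc[OF t]] by simp
  then show "\<exists>D. (q_piece j has_real_derivative D) (at t) \<and> 0 < D"
    using q_piece_has_derivative[OF assms(1) t] by force
qed (use assms in \<open>auto intro: continuous_on_subset[OF continuous_on_q_piece]\<close>)


lemma weight_ratio_a_mono:
  assumes "j \<in> {1..N}" "x \<in> tau z j"
  shows "weight' j x * A.g_piece j x - weight j x * A.g_piece' j x \<ge> 0"
proof -
  have x: "x \<in> {z (j - 1)..z j}" using assms(2) by (rule A.tau_subset_Icc)
  have "weight' j x * A.g_piece j x - weight j x * A.g_piece' j x
      = (C.g_tilde j x)\<^sup>2 * (A.g_tilde' j x * A.g_piece j x - A.g_tilde j x * A.g_piece' j x)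
        + 2 * A.g_tilde j x * C.g_tilde j x * C.g_tilde' j x * A.g_piece j x"
    unfolding weight_def weight'_def by algebra
  moreover have "0 \<le> 2 * A.g_tilde j x * C.g_tilde j x * C.g_tilde' j x * A.g_piece j x"
    using A.g_tilde_pos[OF assms(1) x] C.g_tilde_pos[OF assms(1) x] C.g_tilde'_nonneg[OF assms]
      A.g_piece_pos[OF assms(1) x] by simp
  ultimately show ?thesis using A.g_tilde_ratio_mono[OF assms] by simp
qed

lemma weight_ratio_c2_mono:
  assumes "j \<in> {1..N}" "x \<in> tau z j"
  shows "weight' j x * (C.g_piece j x)\<^sup>2 - weight j x * (2 * C.g_piece j x * C.g_piece' j x) \<ge> 0"
proof -
  have x: "x \<in> {z (j - 1)..z j}" using assms(2) by (rule A.tau_subset_Icc)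
  have "weight' j x * (C.g_piece j x)\<^sup>2 - weight j x * (2 * C.g_piece j x * C.g_piece' j x)
      = A.g_tilde' j x * (C.g_tilde j x * C.g_piece j x)\<^sup>2
        + 2 * A.g_tilde j x * C.g_tilde j x * C.g_piece j x
          * (C.g_tilde' j x * C.g_piece j x - C.g_tilde j x * C.g_piece' j x)"
    unfolding weight_def weight'_def by algebra
  moreover have "0 \<le> 2 * A.g_tilde j x * C.g_tilde j x * C.g_piece j x"
    using A.g_tilde_pos[OF assms(1) x] C.g_tilde_pos[OF assms(1) x] C.g_piece_pos[OF assms(1) x] by simp
  ultimately show ?thesis
    using A.g_tilde'_nonneg[OF assms] C.g_tilde_ratio_mono[OF assms] by simp
qed

lemma qfun_div_has_derivative_ge:
  assumes j: "j \<in> {1..N}" and x: "x \<in> tau z j"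
    and h: "\<forall>y\<in>tau z j. g y = h y" "(h has_real_derivative h') (at x)" "h x > 0"
    and ratio: "weight' j x * h x - weight j x * h' \<ge> 0"
  shows "\<exists>D. ((\<lambda>y. qfun a c z N y / g y) has_real_derivative D) (at x) \<and> 1 / g x \<le> D"
proof -
  have xc: "x \<in> {z (j - 1)..z j}" using x by (rule A.tau_subset_Icc)
  obtain D where D: "((\<lambda>y. weight j y * q_factor j y / h y) has_real_derivative D) (at x)" "1 / h x \<le> D"
    using DERIV_weighted_quotient_ge_inverse[OF weight_has_derivative[OF j x] q_factor_has_derivative[OF j x]
        h(2) weight_pos[OF j xc] h(3) q_factor_nonneg[OF j xc] ratio] by blast
  have "((\<lambda>y. qfun a c z N y / g y) has_real_derivative D) (at x)"
    by (rule has_field_derivative_transform_within_open[OF D(1) _ x])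
       (use h(1) in \<open>auto simp: tau_def qfun_eq_q_piece[OF j] q_piece_def\<close>)
  then show ?thesis using D(2) h(1) x by auto
qed

lemma qfun_div_a_has_derivative_ge:
  assumes "j \<in> {1..N}" "x \<in> tau z j"
  shows "\<exists>D. ((\<lambda>y. qfun a c z N y / a y) has_real_derivative D) (at x) \<and> 1 / a x \<le> D"
  using A.g_eq_g_piece[OF assms(1)] A.g_piece_has_derivative[OF assms]
    A.g_piece_pos[OF assms(1) A.tau_subset_Icc[OF assms(2)]] weight_ratio_a_mono[OF assms]
  by (intro qfun_div_has_derivative_ge[OF assms]) auto

lemma qfun_div_c2_has_derivative_ge:
  assumes "j \<in> {1..N}" "x \<in> tau z j"
  shows "\<exists>D. ((\<lambda>y. qfun a c z N y / (c y)\<^sup>2) has_real_derivative D) (at x) \<and> 1 / (c x)\<^sup>2 \<le> D"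
proof (rule qfun_div_has_derivative_ge[OF assms])
  show "((\<lambda>y. (C.g_piece j y)\<^sup>2) has_real_derivative 2 * C.g_piece j x * C.g_piece' j x) (at x)"
    by (rule derivative_eq_intros C.g_piece_has_derivative[OF assms] | simp)+
qed (use C.g_eq_g_piece[OF assms(1)] C.g_piece_pos[OF assms(1) C.tau_subset_Icc[OF assms(2)]]
       weight_ratio_c2_mono[OF assms] in auto)


lemma tendsto_qfun_div_at_left:
  assumes j: "j \<in> {1..N}" and H: "continuous_on {z (j - 1)..z j} H" "\<forall>y\<in>{z (j - 1)..z j}. H y > 0"
    and h: "\<forall>y\<in>tau z j. h y = H y"
  shows "((\<lambda>y. qfun a c z N y / h y) \<longlongrightarrow> q_piece j (z j) / H (z j)) (at_left (z j))"
proof -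
  have "continuous_on {z (j - 1)..z j} (\<lambda>y. q_piece j y / H y)"
    using continuous_on_q_piece[OF j] H by (intro continuous_intros) force+
  from tendsto_at_left_of_continuous_on_Icc[OF A.piece_less[OF j] this] show ?thesis
    using h qfun_eq_q_piece[OF j] by (auto simp: tau_def)
qed

lemma tendsto_qfun_div_at_right:
  assumes j: "j \<in> {1..N}" and H: "continuous_on {z (j - 1)..z j} H" "\<forall>y\<in>{z (j - 1)..z j}. H y > 0"
    and h: "\<forall>y\<in>tau z j. h y = H y"
  shows "((\<lambda>y. qfun a c z N y / h y) \<longlongrightarrow> q_piece j (z (j - 1)) / H (z (j - 1))) (at_right (z (j - 1)))"
proof -
  have "continuous_on {z (j - 1)..z j} (\<lambda>y. q_piece j y / H y)"
    using continuous_on_q_piece[OF j] H by (intro continuous_intros) force+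
  from tendsto_at_right_of_continuous_on_Icc[OF A.piece_less[OF j] this] show ?thesis
    using h qfun_eq_q_piece[OF j] by (auto simp: tau_def)
qed

lemma gamma_c_ge:
  assumes "1 \<le> m" "m < N"
  shows "1 \<le> gamma_c a c z m"
    and "A.g_piece (Suc m) (z m) / A.g_piece m (z m) \<le> gamma_c a c z m"
    and "(C.g_piece (Suc m) (z m))\<^sup>2 / (C.g_piece m (z m))\<^sup>2 \<le> gamma_c a c z m"
proof -
  have jm: "m \<in> {1..N}" and jm1: "Suc m \<in> {1..N}" using assms by auto
  have "llim a (z m) = A.g_piece m (z m)" "rlim a (z m) = A.g_piece (Suc m) (z m)"
    "llim (\<lambda>x. (c x)\<^sup>2) (z m) = (C.g_piece m (z m))\<^sup>2"
    "rlim (\<lambda>x. (c x)\<^sup>2) (z m) = (C.g_piece (Suc m) (z m))\<^sup>2"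
    using llim_eqI[OF A.tendsto_g_at_left[OF jm]] rlim_eqI[OF A.tendsto_g_at_right[OF jm1]]
      llim_eqI[OF tendsto_power[OF C.tendsto_g_at_left[OF jm]]]
      rlim_eqI[OF tendsto_power[OF C.tendsto_g_at_right[OF jm1]]]
    by simp_all
  then show "1 \<le> gamma_c a c z m"
    "A.g_piece (Suc m) (z m) / A.g_piece m (z m) \<le> gamma_c a c z m"
    "(C.g_piece (Suc m) (z m))\<^sup>2 / (C.g_piece m (z m))\<^sup>2 \<le> gamma_c a c z m"
    unfolding gamma_c_def by auto
qed

text \<open>alpha_c and sigma_c absorb the jump of the weight across z m.\<close>
lemma q_piece_jump:
  assumes m: "1 \<le> m" "m < N" and p: "0 < p" "0 < p'" "p' / p \<le> gamma_c a c z m"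
  shows "q_piece m (z m) / p \<le> q_piece (Suc m) (z m) / p'"
proof -
  have jm: "m \<in> {1..N}" and jm1: "Suc m \<in> {1..N}" using m by auto
  have zm: "z m \<in> {z (m - 1)..z m}" "z m \<in> {z (Suc m - 1)..z (Suc m)}"
    using A.piece_less[OF jm] A.piece_less[OF jm1] by auto
  define u u' v v' where "u = A.g_tilde m (z m)" and "u' = A.g_tilde (Suc m) (z m)"
    and "v = (C.g_tilde m (z m))\<^sup>2" and "v' = (C.g_tilde (Suc m) (z m))\<^sup>2"
  have alpha: "alpha_c a z N m = max (u / u') 1"
    using llim_eqI[OF A.tendsto_tilde_at_left[OF jm]] rlim_eqI[OF A.tendsto_tilde_at_right[OF jm1]]
    unfolding alpha_c_def u_def u'_def by simp
  have sigma: "sigma_c c z N m = max (v / v') 1"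
    using llim_eqI[OF tendsto_power[OF C.tendsto_tilde_at_left[OF jm]]]
      rlim_eqI[OF tendsto_power[OF C.tendsto_tilde_at_right[OF jm1]]]
    unfolding sigma_c_def v_def v'_def by simp
  have "q_factor (Suc m) (z m) = Acoef a c z N (Suc m)"
    unfolding q_factor_def by simp
  also have "\<dots> = alpha_c a z N m * sigma_c c z N m * gamma_c a c z m * q_factor m (z m)"
    using Acoef_Suc[OF m(1)] Iac_eq_integral[OF jm, of "z m"] A.piece_less[OF jm]
    unfolding q_factor_def by simp
  finally have right: "q_piece (Suc m) (z m)
      = u' * v' * (max (u / u') 1 * max (v / v') 1 * gamma_c a c z m * q_factor m (z m))"
    unfolding q_piece_def weight_def u'_def v'_def alpha sigma by simp
  have left: "q_piece m (z m) = u * v * q_factor m (z m)"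
    unfolding q_piece_def weight_def u_def v_def by simp
  show ?thesis
    unfolding left right
    using A.g_tilde_pos[OF jm zm(1)] A.g_tilde_pos[OF jm1 zm(2)] C.g_tilde_pos[OF jm zm(1)]
      C.g_tilde_pos[OF jm1 zm(2)] q_factor_nonneg[OF jm zm(1)] p
    by (intro jump_bound) (auto simp: u_def u'_def v_def v'_def)
qed

lemma q_piece_end_le_start:
  assumes i: "i \<in> {1..N}"
  shows "i < k \<Longrightarrow> k \<le> N \<Longrightarrow> q_piece i (z i) \<le> q_piece k (z (k - 1))"
proof (induction k)
  case (Suc k)
  have step: "q_piece k (z k) \<le> q_piece (Suc k) (z k)" if "1 \<le> k"
    using q_piece_jump[of k 1 1] gamma_c_ge(1)[of k] that Suc.prems by simp
  show ?case
  proof (cases "k = i")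
    case True
    then show ?thesis using step i by auto
  next
    case False
    then have k: "i < k" "k \<in> {1..N}" using i Suc.prems by auto
    have "q_piece i (z i) \<le> q_piece k (z (k - 1))" using Suc.IH k Suc.prems by simp
    also have "\<dots> \<le> q_piece k (z k)"
      using q_piece_strict_mono[OF k(2), of "z (k - 1)" "z k"] A.piece_less[OF k(2)] by auto
    also have "\<dots> \<le> q_piece (Suc k) (z k)" using step k by auto
    finally show ?thesis by simp
  qed
qed simp

lemma qfun_strict_mono:
  assumes x: "x \<in> (\<Union>j\<in>{1..N}. tau z j)" and y: "y \<in> (\<Union>j\<in>{1..N}. tau z j)" and "x < y"
  shows "qfun a c z N x < qfun a c z N y"
proof -
  obtain i k where i: "i \<in> {1..N}" "x \<in> tau z i" and k: "k \<in> {1..N}" "y \<in> tau z k"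
    using x y by blast
  have "i \<le> k"
  proof (rule ccontr)
    assume "\<not> i \<le> k"
    then have "z k \<le> z (i - 1)" using i(1) by (intro partition_mono[OF A.z_less]) auto
    then show False using i(2) k(2) \<open>x < y\<close> by (auto simp: tau_def)
  qed
  then consider "i = k" | "i < k" by linarith
  then show ?thesis
  proof cases
    case 1
    then show ?thesis
      using q_piece_strict_mono[OF k(1) A.tau_subset_Icc A.tau_subset_Icc \<open>x < y\<close>] i(2) k(2)
      by (simp add: qfun_eq_q_piece[OF i] qfun_eq_q_piece[OF k])
  next
    case 2
    have "q_piece i x < q_piece i (z i)"
      using q_piece_strict_mono[OF i(1) A.tau_subset_Icc[OF i(2)], of "z i"] A.piece_less[OF i(1)] i(2)
      by (auto simp: tau_def)
    also have "\<dots> \<le> q_piece k (z (k - 1))" using q_piece_end_le_start[OF i(1) 2] k(1) by simp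
    also have "\<dots> < q_piece k y"
      using q_piece_strict_mono[OF k(1) _ A.tau_subset_Icc[OF k(2)], of "z (k - 1)"] A.piece_less[OF k(1)] k(2)
      by (auto simp: tau_def)
    finally show ?thesis by (simp add: qfun_eq_q_piece[OF i] qfun_eq_q_piece[OF k])
  qed
qed

lemma tendsto_qfun_at_start:
  assumes "1 \<le> N"
  shows "(qfun a c z N \<longlongrightarrow> 0) (at_right (z 0))"
proof -
  have "q_piece 1 (z 0) = 0" unfolding q_piece_def q_factor_def Acoef_def by simp
  then show ?thesis
    using tendsto_qfun_div_at_right[of 1 "\<lambda>_. 1" "\<lambda>_. 1"] assms by simp
qed

lemma qfun_div_a_jump:
  assumes "j \<in> {1..N - 1}"
  shows "\<exists>l r. ((\<lambda>y. qfun a c z N y / a y) \<longlongrightarrow> l) (at_left (z j))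
    \<and> ((\<lambda>y. qfun a c z N y / a y) \<longlongrightarrow> r) (at_right (z j)) \<and> l - r \<le> 0"
proof (intro exI conjI)
  have j: "j \<in> {1..N}" "Suc j \<in> {1..N}" "1 \<le> j" "j < N" using assms by auto
  show "((\<lambda>y. qfun a c z N y / a y) \<longlongrightarrow> q_piece j (z j) / A.g_piece j (z j)) (at_left (z j))"
    using A.continuous_on_g_piece[OF j(1)] A.g_piece_pos[OF j(1)] A.g_eq_g_piece[OF j(1)]
    by (intro tendsto_qfun_div_at_left[OF j(1)]) auto
  have "((\<lambda>y. qfun a c z N y / a y) \<longlongrightarrow>
      q_piece (Suc j) (z (Suc j - 1)) / A.g_piece (Suc j) (z (Suc j - 1))) (at_right (z (Suc j - 1)))"
    using A.continuous_on_g_piece[OF j(2)] A.g_piece_pos[OF j(2)] A.g_eq_g_piece[OF j(2)]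
    by (intro tendsto_qfun_div_at_right[OF j(2)]) auto
  then show "((\<lambda>y. qfun a c z N y / a y) \<longlongrightarrow>
      q_piece (Suc j) (z j) / A.g_piece (Suc j) (z j)) (at_right (z j))"
    by simp
  show "q_piece j (z j) / A.g_piece j (z j) - q_piece (Suc j) (z j) / A.g_piece (Suc j) (z j) \<le> 0"
    using q_piece_jump[OF j(3,4) A.g_piece_pos A.g_piece_pos gamma_c_ge(2)[OF j(3,4)]]
      A.piece_less[OF j(1)] A.piece_less[OF j(2)] j by simp
qed

lemma qfun_div_c2_jump:
  assumes "j \<in> {1..N - 1}"
  shows "\<exists>l r. ((\<lambda>y. qfun a c z N y / (c y)\<^sup>2) \<longlongrightarrow> l) (at_left (z j))
    \<and> ((\<lambda>y. qfun a c z N y / (c y)\<^sup>2) \<longlongrightarrow> r) (at_right (z j)) \<and> l - r \<le> 0"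
proof (intro exI conjI)
  have j: "j \<in> {1..N}" "Suc j \<in> {1..N}" "1 \<le> j" "j < N" using assms by auto
  show "((\<lambda>y. qfun a c z N y / (c y)\<^sup>2) \<longlongrightarrow> q_piece j (z j) / (C.g_piece j (z j))\<^sup>2) (at_left (z j))"
    using C.continuous_on_g_piece[OF j(1)] C.g_piece_pos[OF j(1)] C.g_eq_g_piece[OF j(1)]
    by (intro tendsto_qfun_div_at_left[OF j(1)] continuous_intros) fastforce+
  have "((\<lambda>y. qfun a c z N y / (c y)\<^sup>2) \<longlongrightarrow>
      q_piece (Suc j) (z (Suc j - 1)) / (C.g_piece (Suc j) (z (Suc j - 1)))\<^sup>2) (at_right (z (Suc j - 1)))"
    using C.continuous_on_g_piece[OF j(2)] C.g_piece_pos[OF j(2)] C.g_eq_g_piece[OF j(2)]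
    by (intro tendsto_qfun_div_at_right[OF j(2)] continuous_intros) fastforce+
  then show "((\<lambda>y. qfun a c z N y / (c y)\<^sup>2) \<longlongrightarrow>
      q_piece (Suc j) (z j) / (C.g_piece (Suc j) (z j))\<^sup>2) (at_right (z j))"
    by simp
  show "q_piece j (z j) / (C.g_piece j (z j))\<^sup>2
      - q_piece (Suc j) (z j) / (C.g_piece (Suc j) (z j))\<^sup>2 \<le> 0"
    using q_piece_jump[OF j(3,4) _ _ gamma_c_ge(3)[OF j(3,4)]] C.g_piece_pos[OF j(1), of "z j"]
      C.g_piece_pos[OF j(2), of "z j"] A.piece_less[OF j(1)] A.piece_less[OF j(2)] by simp
qed

end

theorem lemma5p9:
  fixes L amin amax cmin cmax :: real and a c :: "real \<Rightarrow> real"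
    and z :: "nat \<Rightarrow> real" and N :: nat
  assumes L: "L > 0"
    and pos: "amin > 0" "cmin > 0"
    and abnd: "\<forall>x\<in>{-L..L}. amin \<le> a x \<and> a x \<le> amax"
    and cbnd: "\<forall>x\<in>{-L..L}. cmin \<le> c x \<and> c x \<le> cmax"
    and z0: "z 0 = -L" and zN: "z N = L"
    and zinc: "\<forall>j\<in>{1..N}. z (j - 1) < z j"
    and aC1: "\<forall>j\<in>{1..N}. C1_piece a (z (j - 1)) (z j) \<and> sign_piece a (z (j - 1)) (z j)"
    and cC1: "\<forall>j\<in>{1..N}. C1_piece c (z (j - 1)) (z j) \<and> sign_piece c (z (j - 1)) (z j)"
  defines "q \<equiv> qfun a c z N"
  shows "(\<forall>x\<in>(\<Union>j\<in>{1..N}. tau z j). \<forall>y\<in>(\<Union>j\<in>{1..N}. tau z j). x < y \<longrightarrow> q x < q y)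
    \<and> (q \<longlongrightarrow> 0) (at_right (-L))
    \<and> (\<forall>j\<in>{1..N}. \<forall>x\<in>tau z j.
          (\<exists>D. ((\<lambda>y. q y / a y) has_real_derivative D) (at x) \<and> D \<ge> 1 / a x)
        \<and> (\<exists>D. ((\<lambda>y. q y / (c y)\<^sup>2) has_real_derivative D) (at x) \<and> D \<ge> 1 / (c x)\<^sup>2))
    \<and> (\<forall>j\<in>{1..N - 1}.
          (\<exists>l r. ((\<lambda>y. q y / a y) \<longlongrightarrow> l) (at_left (z j))
               \<and> ((\<lambda>y. q y / a y) \<longlongrightarrow> r) (at_right (z j)) \<and> l - r \<le> 0)
        \<and> (\<exists>l r. ((\<lambda>y. q y / (c y)\<^sup>2) \<longlongrightarrow> l) (at_left (z j))
               \<and> ((\<lambda>y. q y / (c y)\<^sup>2) \<longlongrightarrow> r) (at_right (z j)) \<and> l - r \<le> 0))"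
proof -
  interpret coefficient_pair a c z N amin cmin L
    by unfold_locales (use assms in auto)
  have "1 \<le> N" using z0 zN L by (cases N) auto
  then have "(q \<longlongrightarrow> 0) (at_right (-L))"
    using tendsto_qfun_at_start z0 unfolding q_def by simp
  then show ?thesis
    unfolding q_def
    using qfun_strict_mono qfun_div_a_has_derivative_ge qfun_div_c2_has_derivative_ge
      qfun_div_a_jump qfun_div_c2_jump
    by blast
qed

end
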